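(* Let $\mathcal{A}=(\Sigma,Q,q_0,\delta,F)$ be an alternating safety automaton and $p\in\Sigma$. If no two states of $\mathcal{A}$ are existentially in conflict for $p$, then $\mathcal{A}$ is in existential normal form for $p$, i.e. $\mathcal{L}(\exists^\circ p.\mathcal{A})=\mathcal{L}(\exists p.\mathcal{A})$.
   Context: $\Sigma$ is a finite set of Boolean variables; words are $w\in(2^\Sigma)^\omega$ with $k$-th letter $w[k]$. $L_\Sigma=\Sigma\cup\{\neg a:a\in\Sigma\}$; in a letter $\sigma$, $a$ is true iff $a\in\sigma$ and $\neg a$ iff $a\notin\sigma$. An alternating Büchi automaton $\mathcal{A}=(\Sigma,Q,q_0,\delta,F)$ has finite $Q$, $q_0\in Q$, $F\subseteq Q$ and $\delta:Q\to\mathbb{B}^+(Q\cup L_\Sigma)$ (positive Boolean formulas with $\wedge,\vee$, true, false over atoms in $Q\cup L_\Sigma$). $X\subseteq Q\cup L_\Sigma$ satisfies $\delta(q)$ if $\delta(q)$ is true when exactly the atoms of $X$ are true; $\mathit{mSat}(\delta(q))$ is the set of minimal satisfying sets. A run on $w$ is a $Q$-labeled tree with root labeled $q_0$ such that for each node at depth $k$ labeled $q$, with $S$ the labels of its children, $S\cup\{\ell\in L_\Sigma:\ell\text{ true in }w[k]\}$ satisfies $\delta(q)$; accepting if every infinite branch visits $F$ infinitely often; $\mathcal{L}(\mathcal{A})$ is the set of words with an accepting run. $\mathcal{A}$ is a safety automaton if $F=Q$. $\mathcal{L}(\exists p.\mathcal{A})$ is the set of $w\in(2^{\Sigma\setminus\{p\}})^\omega$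 such that some $w'\in(2^\Sigma)^\omega$ with $w'[k]\setminus\{p\}=w[k]$ for all $k$ lies in $\mathcal{L}(\mathcal{A})$. $\exists^\circ p.\mathcal{A}=(\Sigma\setminus\{p\},Q,q_0,\delta',F)$ with $\delta'(q)=\delta(q)[p\mapsto1]\vee\delta(q)[p\mapsto0]$, where $B[p\mapsto1]$ replaces atom $p$ by true and $\neg p$ by false, and $B[p\mapsto0]$ the reverse. An existential unfolding of $\mathcal{A}$ is a DAG $(V,E)$ with $V\subseteq(Q\cup L_\Sigma)\times\mathbb{N}$, $(q_0,0)\in V$, edges only from $Q\times\{i\}$ to $(Q\cup L_\Sigma)\times\{i+1\}$, where $V,E$ are the smallest sets such that for every $(q,i)\in V$ with $q\in Q$ there is a chosen $X\in\mathit{mSat}(\delta(q))$ with $X\times\{i+1\}\subseteq V$ and $\{(q,i)\}\times(X\times\{i+1\})\subseteq E$ (exactly the successors of $(q,i)$). $\mathit{reach}(v)$ denotes the vertices reachable from $v$ by a (possibly empty) path. Two states $q,q'$ are existentially in conflict for $p$ if there exist an existential unfolding $(V,E)$ and $i\in\mathbb{N}$ with $(q,i),(q',i)\in V$, and $i'\in\mathbb{N}$ with $(p,i')\in\mathit{reach}(q,i)$ and $(\neg p,i')\in\mathit{reach}(q',i)$. *)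

theory Defs
  imports Main
begin

datatype 'v lit = Pos 'v | Neg 'v

type_synonym ('q, 'v) atom = "'q + 'v lit"

datatype ('q, 'v) pbf =
    PTrue
  | PFalse
  | Atom "('q, 'v) atom"
  | PAnd "('q, 'v) pbf" "('q, 'v) pbf"
  | POr "('q, 'v) pbf" "('q, 'v) pbf"

fun sat :: "('q, 'v) atom set \<Rightarrow> ('q, 'v) pbf \<Rightarrow> bool" where
  "sat X PTrue = True"
| "sat X PFalse = False"
| "sat X (Atom a) = (a \<in> X)"
| "sat X (PAnd b1 b2) = (sat X b1 \<and> sat X b2)"
| "sat X (POr b1 b2) = (sat X b1 \<or> sat X b2)"

fun atoms :: "('q, 'v) pbf \<Rightarrow> ('q, 'v) atom set" where
  "atoms PTrue = {}"
| "atoms PFalse = {}"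
| "atoms (Atom a) = {a}"
| "atoms (PAnd b1 b2) = atoms b1 \<union> atoms b2"
| "atoms (POr b1 b2) = atoms b1 \<union> atoms b2"

definition mSat :: "('q, 'v) pbf \<Rightarrow> ('q, 'v) atom set set" where
  "mSat B = {X. sat X B \<and> (\<forall>Y. Y \<subset> X \<longrightarrow> \<not> sat Y B)}"

fun subst_var :: "'v \<Rightarrow> bool \<Rightarrow> ('q, 'v) pbf \<Rightarrow> ('q, 'v) pbf" where
  "subst_var p b PTrue = PTrue"
| "subst_var p b PFalse = PFalse"
| "subst_var p b (Atom (Inl q)) = Atom (Inl q)"
| "subst_var p b (Atom (Inr (Pos a))) =
     (if a = p then (if b then PTrue else PFalse) else Atom (Inr (Pos a)))"
| "subst_var p b (Atom (Inr (Neg a))) =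
     (if a = p then (if b then PFalse else PTrue) else Atom (Inr (Neg a)))"
| "subst_var p b (PAnd b1 b2) = PAnd (subst_var p b b1) (subst_var p b b2)"
| "subst_var p b (POr b1 b2) = POr (subst_var p b b1) (subst_var p b b2)"

record ('q, 'v) aba =
  alph :: "'v set"
  states :: "'q set"
  init :: 'q
  trans :: "'q \<Rightarrow> ('q, 'v) pbf"
  acc :: "'q set"

definition lits :: "'v set \<Rightarrow> ('q, 'v) atom set" where
  "lits \<Sigma> = {Inr (Pos a) | a. a \<in> \<Sigma>} \<union> {Inr (Neg a) | a. a \<in> \<Sigma>}"

definition lits_true :: "'v set \<Rightarrow> 'v set \<Rightarrow> ('q, 'v) atom set" where
  "lits_true \<Sigma> \<sigma> = {Inr (Pos a) | a. a \<in> \<Sigma> \<and> a \<in> \<sigma>} \<union> {Inr (Neg a) | a. a \<in> \<Sigma> \<and> a \<notin> \<sigma>}"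

definition wf_aba :: "('q, 'v) aba \<Rightarrow> bool" where
  "wf_aba A \<longleftrightarrow> finite (alph A) \<and> finite (states A) \<and> init A \<in> states A
     \<and> acc A \<subseteq> states A
     \<and> (\<forall>q \<in> states A. atoms (trans A q) \<subseteq> Inl ` states A \<union> lits (alph A))"

definition safety_aba :: "('q, 'v) aba \<Rightarrow> bool" where
  "safety_aba A \<longleftrightarrow> acc A = states A"

definition is_word :: "'v set \<Rightarrow> (nat \<Rightarrow> 'v set) \<Rightarrow> bool" where
  "is_word \<Sigma> w \<longleftrightarrow> (\<forall>k. w k \<subseteq> \<Sigma>)"

text \<open>A run on w: a Q-labelled tree given by a prefix-closed set T of node addresses
  (lists of child indices, depth = length) and a labelling r.\<close>
definition is_run :: "('q, 'v) aba \<Rightarrow> (nat \<Rightarrow> 'v set) \<Rightarrow> nat list set \<Rightarrow> (nat list \<Rightarrow> 'q) \<Rightarrow> bool" where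
  "is_run A w T r \<longleftrightarrow>
     [] \<in> T \<and> (\<forall>x i. x @ [i] \<in> T \<longrightarrow> x \<in> T) \<and> r [] = init A
     \<and> (\<forall>x \<in> T. r x \<in> states A)
     \<and> (\<forall>x \<in> T. sat (Inl ` {r (x @ [i]) | i. x @ [i] \<in> T} \<union> lits_true (alph A) (w (length x)))
                     (trans A (r x)))"

definition is_branch :: "nat list set \<Rightarrow> (nat \<Rightarrow> nat list) \<Rightarrow> bool" where
  "is_branch T \<pi> \<longleftrightarrow> \<pi> 0 = [] \<and> (\<forall>k. \<pi> k \<in> T \<and> (\<exists>i. \<pi> (Suc k) = \<pi> k @ [i]))"

definition accepting_run :: "('q, 'v) aba \<Rightarrow> (nat \<Rightarrow> 'v set) \<Rightarrow> nat list set \<Rightarrow> (nat list \<Rightarrow> 'q) \<Rightarrow> bool" where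
  "accepting_run A w T r \<longleftrightarrow> is_run A w T r
     \<and> (\<forall>\<pi>. is_branch T \<pi> \<longrightarrow> infinite {k. r (\<pi> k) \<in> acc A})"

definition lang :: "('q, 'v) aba \<Rightarrow> (nat \<Rightarrow> 'v set) set" where
  "lang A = {w. is_word (alph A) w \<and> (\<exists>T r. accepting_run A w T r)}"

definition lang_proj :: "'v \<Rightarrow> ('q, 'v) aba \<Rightarrow> (nat \<Rightarrow> 'v set) set" where
  "lang_proj p A = {w. is_word (alph A - {p}) w \<and>
      (\<exists>w'. is_word (alph A) w' \<and> (\<forall>k. w' k - {p} = w k) \<and> w' \<in> lang A)}"

definition exists_circ :: "'v \<Rightarrow> ('q, 'v) aba \<Rightarrow> ('q, 'v) aba" where
  "exists_circ p A = A\<lparr> alph := alph A - {p},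
      trans := (\<lambda>q. POr (subst_var p True (trans A q)) (subst_var p False (trans A q))) \<rparr>"

text \<open>An existential unfolding is determined by the choice ch q i of a minimal satisfying set
  for each vertex (Inl q, i).\<close>
inductive_set unf_V :: "('q, 'v) aba \<Rightarrow> ('q \<Rightarrow> nat \<Rightarrow> ('q, 'v) atom set) \<Rightarrow> (('q, 'v) atom \<times> nat) set"
  for A ch where
  root: "(Inl (init A), 0) \<in> unf_V A ch"
| succ: "(Inl q, i) \<in> unf_V A ch \<Longrightarrow> x \<in> ch q i \<Longrightarrow> (x, Suc i) \<in> unf_V A ch"

definition unf_E :: "('q, 'v) aba \<Rightarrow> ('q \<Rightarrow> nat \<Rightarrow> ('q, 'v) atom set) \<Rightarrow> ((('q, 'v) atom \<times> nat) \<times> (('q, 'v) atom \<times> nat)) set" where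
  "unf_E A ch = {((Inl q, i), (x, Suc i)) | q i x. (Inl q, i) \<in> unf_V A ch \<and> x \<in> ch q i}"

definition valid_unfolding :: "('q, 'v) aba \<Rightarrow> ('q \<Rightarrow> nat \<Rightarrow> ('q, 'v) atom set) \<Rightarrow> bool" where
  "valid_unfolding A ch \<longleftrightarrow> (\<forall>q i. (Inl q, i) \<in> unf_V A ch \<longrightarrow> ch q i \<in> mSat (trans A q))"

definition reach :: "('q, 'v) aba \<Rightarrow> ('q \<Rightarrow> nat \<Rightarrow> ('q, 'v) atom set) \<Rightarrow> ('q, 'v) atom \<times> nat \<Rightarrow> (('q, 'v) atom \<times> nat) set" where
  "reach A ch v = {u. (v, u) \<in> (unf_E A ch)\<^sup>*}"

definition ex_conflict :: "('q, 'v) aba \<Rightarrow> 'v \<Rightarrow> 'q \<Rightarrow> 'q \<Rightarrow> bool" where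
  "ex_conflict A p q q' \<longleftrightarrow>
     (\<exists>ch i i'. valid_unfolding A ch \<and> (Inl q, i) \<in> unf_V A ch \<and> (Inl q', i) \<in> unf_V A ch
        \<and> (Inr (Pos p), i') \<in> reach A ch (Inl q, i) \<and> (Inr (Neg p), i') \<in> reach A ch (Inl q', i))"

end

theory Submission
  imports Defs
begin

(* For any automaton, a run of A on a word w' is also a run of exists-circ p. A on w' without p,
   the letter deciding which disjunct of each transition is used. Conversely, an accepting run
   of exists-circ p. A on w resolves p separately at every node. Choosing for every state and
   level a minimal satisfying set of the original transition that agrees with the resolution at
   some such node yields an existential unfolding of A. Without conflicts no level of it uses
   both p and not-p, so adding p to w exactly at the levels that use p gives a word w' on which
   the unfolding, unrolled into a tree, is a run of A; it is accepting since A is a safety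
   automaton. *)

lemma sat_mono: "X \<subseteq> Y \<Longrightarrow> sat X B \<Longrightarrow> sat Y B"
  by (induction B) auto

lemma sat_restrict: "atoms B \<subseteq> Y \<Longrightarrow> sat X B = sat (X \<inter> Y) B"
  by (induction B) auto

lemma finite_atoms: "finite (atoms B)"
  by (induction B) auto

lemma mSat_subset_atoms:
  assumes "M \<in> mSat B" shows "M \<subseteq> atoms B"
proof (rule ccontr)
  assume "\<not> M \<subseteq> atoms B"
  then have "M \<inter> atoms B \<subset> M" by blast
  moreover have "sat (M \<inter> atoms B) B"
    using assms sat_restrict[of B "atoms B" M] by (simp add: mSat_def)
  ultimately show False using assms by (auto simp: mSat_def)
qed

lemma finite_ex_mSat_subset:
  assumes "finite X" "sat X B" shows "\<exists>M \<subseteq> X. M \<in> mSat B"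
  using assms
proof (induction X rule: finite_psubset_induct)
  case (psubset X)
  show ?case
  proof (cases "X \<in> mSat B")
    case False
    then obtain Y where "Y \<subset> X" "sat Y B" using psubset.prems by (auto simp: mSat_def)
    then show ?thesis using psubset.IH by (meson psubset_imp_subset subset_trans)
  qed blast
qed

lemma ex_mSat_subset:
  assumes "sat X B" shows "\<exists>M \<subseteq> X. M \<in> mSat B"
proof -
  have "sat (X \<inter> atoms B) B" using assms sat_restrict[of B "atoms B" X] by simp
  then show ?thesis using finite_ex_mSat_subset[of "X \<inter> atoms B" B] finite_atoms[of B] by blast
qed

definition lit_atom :: "'v \<Rightarrow> bool \<Rightarrow> ('q, 'v) atom" where
  "lit_atom p b = Inr (if b then Pos p else Neg p)"

lemma sat_subst_var:
  "sat X (subst_var p b B) = sat (X - {Inr (Pos p), Inr (Neg p)} \<union> {lit_atom p b}) B"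
  by (induction p b B rule: subst_var.induct) (auto simp: lit_atom_def)

lemma exists_circ_simps [simp]:
  "alph (exists_circ p A) = alph A - {p}"
  "states (exists_circ p A) = states A"
  "init (exists_circ p A) = init A"
  "acc (exists_circ p A) = acc A"
  "trans (exists_circ p A) q = POr (subst_var p True (trans A q)) (subst_var p False (trans A q))"
  by (auto simp: exists_circ_def)

lemma safety_accepting_run:
  assumes "safety_aba A" "is_run A w T r" shows "accepting_run A w T r"
proof -
  have "{k. r (\<pi> k) \<in> acc A} = UNIV" if "is_branch T \<pi>" for \<pi>
    using assms that by (auto simp: safety_aba_def is_run_def is_branch_def)
  then show ?thesis using assms(2) by (simp add: accepting_run_def)
qed

lemma is_run_exists_circ:
  assumes run: "is_run A w T r"
  shows "is_run (exists_circ p A) (\<lambda>k. w k - {p}) T r"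
  unfolding is_run_def
proof (intro conjI ballI)
  fix x assume "x \<in> T"
  let ?S = "Inl ` {r (x @ [i]) | i. x @ [i] \<in> T}"
  let ?\<sigma> = "w (length x)"
  let ?L = "lits_true (alph A - {p}) (?\<sigma> - {p})"
  have "sat (?S \<union> lits_true (alph A) ?\<sigma>) (trans A (r x))"
    using run \<open>x \<in> T\<close> by (simp add: is_run_def)
  then have "sat (?S \<union> ?L - {Inr (Pos p), Inr (Neg p)} \<union> {lit_atom p (p \<in> ?\<sigma>)}) (trans A (r x))"
    by (rule sat_mono[rotated]) (auto simp: lits_true_def lit_atom_def)
  then show "sat (?S \<union> lits_true (alph (exists_circ p A)) (?\<sigma> - {p})) (trans (exists_circ p A) (r x))"
    by (cases "p \<in> ?\<sigma>") (simp_all add: sat_subst_var)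
qed (use run in \<open>auto simp: is_run_def\<close>)

lemma lang_proj_subset_lang_exists_circ: "lang_proj p A \<subseteq> lang (exists_circ p A)"
proof
  fix w assume "w \<in> lang_proj p A"
  then obtain w' T r where w: "is_word (alph A - {p}) w" and w': "\<forall>k. w' k - {p} = w k"
    and acc: "accepting_run A w' T r"
    unfolding lang_proj_def lang_def by blast
  have "w = (\<lambda>k. w' k - {p})" using w' by auto
  then have "accepting_run (exists_circ p A) w T r"
    using acc is_run_exists_circ[of A w' T r p] by (simp add: accepting_run_def)
  then show "w \<in> lang (exists_circ p A)" using w by (auto simp: lang_def)
qed

lemma unf_V_atoms:
  assumes wf: "wf_aba A" and valid: "valid_unfolding A ch" and "(a, k) \<in> unf_V A ch"
  shows "a \<in> Inl ` states A \<union> lits (alph A)"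
  using assms(3)
proof (induction rule: unf_V.induct)
  case root
  then show ?case using wf by (simp add: wf_aba_def)
next
  case (succ q i a)
  then have "q \<in> states A" by (auto simp: lits_def)
  moreover have "a \<in> atoms (trans A q)"
    using succ valid mSat_subset_atoms by (fastforce simp: valid_unfolding_def)
  ultimately show ?case using wf by (auto simp: wf_aba_def)
qed

lemma unf_V_states:
  assumes "wf_aba A" "valid_unfolding A ch" "(Inl q, k) \<in> unf_V A ch"
  shows "q \<in> states A"
  using unf_V_atoms[OF assms] by (auto simp: lits_def)

lemma ex_conflictI:
  assumes "valid_unfolding A ch" "(Inl q, k) \<in> unf_V A ch" "(Inl q', k) \<in> unf_V A ch"
    and "Inr (Pos p) \<in> ch q k" "Inr (Neg p) \<in> ch q' k"
  shows "ex_conflict A p q q'"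
proof -
  have "((Inl q, k), (Inr (Pos p), Suc k)) \<in> unf_E A ch"
    and "((Inl q', k), (Inr (Neg p), Suc k)) \<in> unf_E A ch"
    using assms by (auto simp: unf_E_def)
  then show ?thesis using assms(1-3) unfolding ex_conflict_def reach_def by blast
qed

lemma unfolding_of_exists_circ_run:
  fixes A :: "('q, 'v) aba"
  assumes run: "is_run (exists_circ p A) w T r"
  obtains ch where "valid_unfolding A ch"
    and "\<And>q k. (Inl q, k) \<in> unf_V A ch \<Longrightarrow>
           ch q k \<subseteq> range Inl \<union> lits_true (alph A - {p}) (w k) \<union> {Inr (Pos p), Inr (Neg p)}"
proof -
  define succs :: "nat list \<Rightarrow> ('q, 'v) atom set"
    where "succs x = Inl ` {r (x @ [i]) | i. x @ [i] \<in> T}" for x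
  define good where "good q k M \<longleftrightarrow> M \<in> mSat (trans A q) \<and> (\<exists>x\<in>T. length x = k \<and> r x = q \<and>
      M \<subseteq> succs x \<union> lits_true (alph A - {p}) (w k) \<union> {Inr (Pos p), Inr (Neg p)})" for q k M
  define ch where "ch q k = (SOME M. good q k M)" for q k
  have node_good: "good (r x) (length x) (ch (r x) (length x))" if "x \<in> T" for x
  proof -
    let ?X = "succs x \<union> lits_true (alph A - {p}) (w (length x))"
    have "sat ?X (subst_var p True (trans A (r x))) \<or> sat ?X (subst_var p False (trans A (r x)))"
      using run that by (simp add: is_run_def succs_def)
    then obtain b where "sat (?X - {Inr (Pos p), Inr (Neg p)} \<union> {lit_atom p b}) (trans A (r x))"
      unfolding sat_subst_var by blast
    then obtain M where "M \<in> mSat (trans A (r x))" "M \<subseteq> ?X - {Inr (Pos p), Inr (Neg p)} \<union> {lit_atom p b}"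
      using ex_mSat_subset by blast
    then have "good (r x) (length x) M"
      using that by (cases b) (auto simp: good_def lit_atom_def)
    then show ?thesis unfolding ch_def by (rule someI)
  qed
  have vertex_node: "\<exists>x\<in>T. length x = k \<and> r x = q" if "(a, k) \<in> unf_V A ch" "a = Inl q" for a k q
    using that
  proof (induction arbitrary: q rule: unf_V.induct)
    case root
    then show ?case using run by (auto simp: is_run_def intro!: bexI[of _ "[]"])
  next
    case (succ q' i a)
    then obtain x where "x \<in> T" "length x = i" "r x = q'" by blast
    then obtain y where y: "y \<in> T" "length y = i"
      and "ch q' i \<subseteq> succs y \<union> lits_true (alph A - {p}) (w i) \<union> {Inr (Pos p), Inr (Neg p)}"
      using node_good by (fastforce simp: good_def)
    then have "Inl q \<in> succs y" using succ.hyps(2) succ.prems by (auto simp: lits_true_def)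
    then show ?case using y by (force simp: succs_def)
  qed
  have vertex_good: "good q k (ch q k)" if "(Inl q, k) \<in> unf_V A ch" for q k
    using vertex_node[OF that refl] node_good by blast
  show thesis
  proof
    show "valid_unfolding A ch"
      using vertex_good by (simp add: valid_unfolding_def good_def)
  next
    fix q k assume "(Inl q, k) \<in> unf_V A ch"
    then show "ch q k \<subseteq> range Inl \<union> lits_true (alph A - {p}) (w k) \<union> {Inr (Pos p), Inr (Neg p)}"
      using vertex_good by (fastforce simp: good_def succs_def)
  qed
qed

lemma lits_true_insert_var:
  assumes "p \<in> \<Sigma>" "p \<notin> \<sigma>"
    and "M \<subseteq> range Inl \<union> lits_true (\<Sigma> - {p}) \<sigma> \<union> {Inr (Pos p), Inr (Neg p)}"
    and "\<not> (Inr (Pos p) \<in> M \<and> Inr (Neg p) \<in> M)"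
  shows "M \<subseteq> range Inl \<union> lits_true \<Sigma> (if Inr (Pos p) \<in> M then insert p \<sigma> else \<sigma>)"
  using assms by (auto simp: lits_true_def)

(* Unrolling of an unfolding into a tree: the child of node x for state q has address
   x @ [f q], so that for injective f the state can be recovered from the address. *)
inductive_set unfolding_tree ::
    "('q \<Rightarrow> nat \<Rightarrow> ('q, 'v) atom set) \<Rightarrow> ('q \<Rightarrow> nat) \<Rightarrow> (nat list \<Rightarrow> 'q) \<Rightarrow> nat list set"
  for ch f lab where
  root: "[] \<in> unfolding_tree ch f lab"
| child: "x \<in> unfolding_tree ch f lab \<Longrightarrow> Inl q \<in> ch (lab x) (length x) \<Longrightarrow>
    x @ [f q] \<in> unfolding_tree ch f lab"

lemma run_of_unfolding:
  fixes A :: "('q, 'v) aba"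
  assumes wf: "wf_aba A" and valid: "valid_unfolding A ch"
    and lits: "\<And>q k. (Inl q, k) \<in> unf_V A ch \<Longrightarrow> ch q k \<subseteq> range Inl \<union> lits_true (alph A) (w k)"
  shows "\<exists>T r. is_run A w T r"
proof -
  have "finite (states A)" using wf by (simp add: wf_aba_def)
  then obtain f :: "'q \<Rightarrow> nat" where f: "inj_on f (states A)"
    by (blast dest: finite_imp_inj_to_nat_seg)
  define lab where "lab x = (if x = [] then init A else inv_into (states A) f (last x))" for x
  define T where "T = unfolding_tree ch f lab"
  have lab_child: "lab (x @ [f q]) = q" if "q \<in> states A" for x q
    using f that by (simp add: lab_def)
  have node_vertex: "(Inl (lab x), length x) \<in> unf_V A ch" if "x \<in> T" for x
    using that unfolding T_def
  proof (induction rule: unfolding_tree.induct)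
    case root
    then show ?case by (simp add: lab_def unf_V.root)
  next
    case (child x q)
    then have "(Inl q, Suc (length x)) \<in> unf_V A ch" by (simp add: unf_V.succ)
    then show ?case using lab_child unf_V_states[OF wf valid] by simp
  qed
  have "is_run A w T lab"
    unfolding is_run_def
  proof (intro conjI ballI allI impI)
    show "[] \<in> T" by (simp add: T_def unfolding_tree.root)
    show "x \<in> T" if "x @ [i] \<in> T" for x i
      using that unfolding T_def by (cases rule: unfolding_tree.cases) auto
    show "lab [] = init A" by (simp add: lab_def)
    show "lab x \<in> states A" if "x \<in> T" for x
      using unf_V_states[OF wf valid] node_vertex that by blast
  next
    fix x assume x: "x \<in> T"
    have "sat (ch (lab x) (length x)) (trans A (lab x))"
      using valid node_vertex[OF x] by (auto simp: valid_unfolding_def mSat_def)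
    moreover have "ch (lab x) (length x) \<subseteq>
        Inl ` {lab (x @ [i]) | i. x @ [i] \<in> T} \<union> lits_true (alph A) (w (length x))"
    proof
      fix a assume a: "a \<in> ch (lab x) (length x)"
      show "a \<in> Inl ` {lab (x @ [i]) | i. x @ [i] \<in> T} \<union> lits_true (alph A) (w (length x))"
      proof (cases a)
        case (Inl q)
        have "x @ [f q] \<in> T" using x a Inl unfolding T_def by (auto intro: unfolding_tree.child)
        moreover have "q \<in> states A"
          using unf_V_states[OF wf valid] unf_V.succ[OF node_vertex[OF x] a] Inl by blast
        ultimately have "q \<in> {lab (x @ [i]) | i. x @ [i] \<in> T}"
          by (intro CollectI exI[of _ "f q"]) (simp add: lab_child)
        then show ?thesis using Inl by blast
      next
        case (Inr l)
        then show ?thesis using lits[OF node_vertex[OF x]] a by blast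
      qed
    qed
    ultimately show "sat (Inl ` {lab (x @ [i]) | i. x @ [i] \<in> T} \<union> lits_true (alph A) (w (length x)))
        (trans A (lab x))"
      by (rule sat_mono[rotated])
  qed
  then show ?thesis by blast
qed

lemma lang_exists_circ_subset_lang_proj:
  assumes wf: "wf_aba A" and safe: "safety_aba A" and p: "p \<in> alph A"
    and no_conflict: "\<forall>q \<in> states A. \<forall>q' \<in> states A. \<not> ex_conflict A p q q'"
  shows "lang (exists_circ p A) \<subseteq> lang_proj p A"
proof
  fix w assume "w \<in> lang (exists_circ p A)"
  then obtain T r where w: "is_word (alph A - {p}) w" and run: "is_run (exists_circ p A) w T r"
    by (auto simp: lang_def accepting_run_def)
  obtain ch where valid: "valid_unfolding A ch" and lits: "\<And>q k. (Inl q, k) \<in> unf_V A ch \<Longrightarrow>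
      ch q k \<subseteq> range Inl \<union> lits_true (alph A - {p}) (w k) \<union> {Inr (Pos p), Inr (Neg p)}"
    using unfolding_of_exists_circ_run[OF run] by blast
  define M where "M k = \<Union>{ch q k | q. (Inl q, k) \<in> unf_V A ch}" for k
  define w' where "w' k = (if Inr (Pos p) \<in> M k then insert p (w k) else w k)" for k
  have "M k \<subseteq> range Inl \<union> lits_true (alph A) (w' k)" for k
    unfolding w'_def
  proof (rule lits_true_insert_var[OF p])
    show "p \<notin> w k" using w by (auto simp: is_word_def)
    show "M k \<subseteq> range Inl \<union> lits_true (alph A - {p}) (w k) \<union> {Inr (Pos p), Inr (Neg p)}"
      unfolding M_def using lits by blast
    show "\<not> (Inr (Pos p) \<in> M k \<and> Inr (Neg p) \<in> M k)"
    proof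
      assume "Inr (Pos p) \<in> M k \<and> Inr (Neg p) \<in> M k"
      then obtain q q' where q: "(Inl q, k) \<in> unf_V A ch" and q': "(Inl q', k) \<in> unf_V A ch"
        and "Inr (Pos p) \<in> ch q k" "Inr (Neg p) \<in> ch q' k"
        unfolding M_def by blast
      then have "ex_conflict A p q q'" by (intro ex_conflictI[OF valid])
      moreover have "q \<in> states A" "q' \<in> states A"
        using unf_V_states[OF wf valid] q q' by blast+
      ultimately show False using no_conflict by blast
    qed
  qed
  moreover have "ch q k \<subseteq> M k" if "(Inl q, k) \<in> unf_V A ch" for q k
    unfolding M_def using that by blast
  ultimately have "\<And>q k. (Inl q, k) \<in> unf_V A ch \<Longrightarrow> ch q k \<subseteq> range Inl \<union> lits_true (alph A) (w' k)"
    by blast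
  then obtain T' r' where "is_run A w' T' r'" using run_of_unfolding[OF wf valid] by blast
  then have "accepting_run A w' T' r'" using safe by (simp add: safety_accepting_run)
  moreover have "is_word (alph A) w'" "\<forall>k. w' k - {p} = w k"
    using w p unfolding is_word_def w'_def by auto
  ultimately show "w \<in> lang_proj p A" using w unfolding lang_proj_def lang_def by blast
qed

theorem mainTheorem4:
  fixes A :: "('q, 'v) aba" and p :: 'v
  assumes "wf_aba A" and "safety_aba A" and "p \<in> alph A"
    and "\<forall>q \<in> states A. \<forall>q' \<in> states A. \<not> ex_conflict A p q q'"
  shows "lang (exists_circ p A) = lang_proj p A"
  using lang_exists_circ_subset_lang_proj[OF assms] lang_proj_subset_lang_exists_circ
  by (rule subset_antisym)

end
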